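(* Let $n\in\mathbb N$, $p>0$, and let $W\subseteq[n]$ satisfy $p|W|\ge 200\log n$. Let $d$ satisfy $1\le d\le p|W|/(240\log(np))$. Then, with probability $1-o(n^{-2})$ (as $n\to\infty$), in $G=G(n,p)$ every set $U\subseteq V(G)$ with $|U|\le |W|/(4d)$ satisfies $|N(U,W)|\ge d|U|$.
   Context: $G(n,p)$ is the binomial random graph on $[n]$. For $U\subseteq V(G)$, $N(U)=\big(\bigcup_{u\in U}N(u)\big)\setminus U$ and $N(U,W)=N(U)\cap W$. $\log$ is the natural logarithm; $p,W,d$ may depend on $n$. *)

theory Defs
  imports "HOL-Probability.Probability" "HOL-Library.Landau_Symbols"
begin

definition all_edges :: "nat \<Rightarrow> nat set set" where
  "all_edges n = {e. \<exists>i j. i \<in> {1..n} \<and> j \<in> {1..n} \<and> i \<noteq> j \<and> e = {i, j}}"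

definition Gnp :: "nat \<Rightarrow> real \<Rightarrow> nat set set pmf" where
  "Gnp n p = map_pmf (\<lambda>f. {e \<in> all_edges n. f e})
                (Pi_pmf (all_edges n) False (\<lambda>_. bernoulli_pmf p))"

definition nbr :: "nat set set \<Rightarrow> nat \<Rightarrow> nat set" where
  "nbr E u = {v. {u, v} \<in> E}"

definition nbhd :: "nat set set \<Rightarrow> nat set \<Rightarrow> nat set" where
  "nbhd E U = (\<Union>u\<in>U. nbr E u) - U"

definition nbhd_in :: "nat set set \<Rightarrow> nat set \<Rightarrow> nat set \<Rightarrow> nat set" where
  "nbhd_in E U W = nbhd E U \<inter> W"

end

theory Submission
  imports Defs "HOL-Real_Asymp.Real_Asymp"
begin

(* A union bound. If |N(U,W)| < d|U|, let T = N(U,W) and pick for every x in T a neighbour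
   g x in U: then all edges {g x, x} are present and no edge joins U to W - U - T. For fixed
   U, T, g this has probability p^|T| (1-p)^(|U| |W - U - T|), and there are |U|^|T| maps g.
   As |U| <= |W|/4 and |T| < d|U| <= |W|/4, the set W - U - T has at least |W|/2 elements, so
   the sum over T is at most exp (-p |W| |U| / 4) once p|W| >= 24 d (which holds because
   np >= 200 makes log (np) >= 1). By p|W| >= 200 log n this is at most n^(-50|U|), and
   summing over U gives O(n^-3). *)

lemma finite_all_edges: "finite (all_edges n)"
proof -
  have "all_edges n \<subseteq> Pow {1..n}" unfolding all_edges_def by auto
  then show ?thesis by (rule finite_subset) simp
qed

lemma prob_Gnp_present_absent:
  assumes A: "A \<subseteq> all_edges n" and B: "B \<subseteq> all_edges n" and AB: "A \<inter> B = {}"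
    and p: "0 \<le> p" "p \<le> 1"
  shows "measure_pmf.prob (Gnp n p) {E. A \<subseteq> E \<and> E \<inter> B = {}} = p ^ card A * (1 - p) ^ card B"
proof -
  define X where "X e = (if e \<in> A then {True} else if e \<in> B then {False} else UNIV)" for e
  have fin: "finite (all_edges n)" by (rule finite_all_edges)
  have preimage: "(\<lambda>f. {e \<in> all_edges n. f e}) -` {E. A \<subseteq> E \<and> E \<inter> B = {}} = Pi (all_edges n) X"
    using A B AB unfolding X_def Pi_def by auto
  have "measure_pmf.prob (Gnp n p) {E. A \<subseteq> E \<and> E \<inter> B = {}}
      = measure_pmf.prob (Pi_pmf (all_edges n) False (\<lambda>_. bernoulli_pmf p)) (Pi (all_edges n) X)"
    unfolding Gnp_def measure_map_pmf preimage ..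
  also have "\<dots> = (\<Prod>e\<in>all_edges n. measure_pmf.prob (bernoulli_pmf p) (X e))"
    using fin by (rule measure_Pi_pmf_Pi)
  also have "\<dots> = (\<Prod>e\<in>all_edges n. if e \<in> A then p else if e \<in> B then 1 - p else 1)"
    using p by (intro prod.cong refl) (auto simp: X_def measure_pmf_single)
  also have "\<dots> = (\<Prod>e\<in>all_edges n \<inter> A. p) * (\<Prod>e\<in>(all_edges n - A) \<inter> B. 1 - p)"
    using fin by (simp add: prod.If_cases Diff_eq)
  also have "all_edges n \<inter> A = A" using A by auto
  also have "(all_edges n - A) \<inter> B = B" using B AB by auto
  finally show ?thesis by simp
qed

definition map_edges :: "(nat \<Rightarrow> nat) \<Rightarrow> nat set \<Rightarrow> nat set set" where
  "map_edges g T = (\<lambda>x. {g x, x}) ` T"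

definition edges_between :: "nat set \<Rightarrow> nat set \<Rightarrow> nat set set" where
  "edges_between U Y = (\<lambda>(x, y). {x, y}) ` (U \<times> Y)"

lemma card_map_edges:
  assumes "g ` T \<subseteq> U" "T \<inter> U = {}"
  shows "card (map_edges g T) = card T"
  unfolding map_edges_def
proof (rule card_image, rule inj_onI)
  fix x y assume "x \<in> T" "y \<in> T" "{g x, x} = {g y, y}"
  with assms show "x = y" by (auto simp: doubleton_eq_iff)
qed

lemma card_edges_between:
  assumes "U \<inter> Y = {}"
  shows "card (edges_between U Y) = card U * card Y"
proof -
  have "inj_on (\<lambda>(x, y). {x, y}) (U \<times> Y)"
    using assms by (auto simp: inj_on_def doubleton_eq_iff)
  then show ?thesis unfolding edges_between_def by (simp add: card_image card_cartesian_product)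
qed

lemma map_edges_subset_all_edges:
  assumes "g ` T \<subseteq> U" "T \<inter> U = {}" "T \<subseteq> {1..n}" "U \<subseteq> {1..n}"
  shows "map_edges g T \<subseteq> all_edges n"
  using assms unfolding map_edges_def all_edges_def by blast

lemma edges_between_subset_all_edges:
  assumes "U \<inter> Y = {}" "U \<subseteq> {1..n}" "Y \<subseteq> {1..n}"
  shows "edges_between U Y \<subseteq> all_edges n"
  using assms unfolding edges_between_def all_edges_def by blast

lemma map_edges_disjoint_edges_between:
  assumes "g ` T \<subseteq> U" "T \<inter> U = {}" "T \<inter> Y = {}"
  shows "map_edges g T \<inter> edges_between U Y = {}"
  using assms unfolding map_edges_def edges_between_def by (auto simp: doubleton_eq_iff)

lemma prob_Gnp_map_edges_no_edges_between:
  assumes "0 \<le> p" "p \<le> 1" "U \<subseteq> {1..n}" "W \<subseteq> {1..n}" "T \<subseteq> W - U" "g ` T \<subseteq> U"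
  shows "measure_pmf.prob (Gnp n p)
           {E. map_edges g T \<subseteq> E \<and> E \<inter> edges_between U (W - U - T) = {}}
         = p ^ card T * (1 - p) ^ (card U * card (W - U - T))"
proof -
  have disj: "T \<inter> U = {}" "U \<inter> (W - U - T) = {}" "T \<inter> (W - U - T) = {}"
    using assms(5) by auto
  have "T \<subseteq> {1..n}" "W - U - T \<subseteq> {1..n}" using assms(4,5) by auto
  then have "map_edges g T \<subseteq> all_edges n" "edges_between U (W - U - T) \<subseteq> all_edges n"
    using map_edges_subset_all_edges[OF assms(6) disj(1) _ assms(3)]
      edges_between_subset_all_edges[OF disj(2) assms(3)] by simp_all
  from prob_Gnp_present_absent[OF this map_edges_disjoint_edges_between[OF assms(6) disj(1,3)] assms(1,2)]
  show ?thesis using assms(6) disj by (simp add: card_map_edges card_edges_between)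
qed

lemma nbhd_in_subset: "nbhd_in E U W \<subseteq> W - U"
  unfolding nbhd_in_def nbhd_def by auto

lemma nbhd_in_witness:
  obtains g where "g ` nbhd_in E U W \<subseteq> U" "map_edges g (nbhd_in E U W) \<subseteq> E"
    "E \<inter> edges_between U (W - U - nbhd_in E U W) = {}"
proof
  define T where "T = nbhd_in E U W"
  define g where "g x = (SOME u. u \<in> U \<and> {u, x} \<in> E)" for x
  have adjacent: "\<exists>u. u \<in> U \<and> {u, x} \<in> E" if "x \<in> T" for x
    using that unfolding T_def nbhd_in_def nbhd_def nbr_def by auto
  have g: "g x \<in> U \<and> {g x, x} \<in> E" if "x \<in> T" for x
    unfolding g_def using adjacent[OF that] by (rule someI_ex)
  then show "g ` nbhd_in E U W \<subseteq> U" "map_edges g (nbhd_in E U W) \<subseteq> E"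
    unfolding T_def map_edges_def by auto
  show "E \<inter> edges_between U (W - U - nbhd_in E U W) = {}"
    unfolding edges_between_def nbhd_in_def nbhd_def nbr_def by auto
qed

lemma prob_Gnp_small_nbhd_in_le:
  fixes k :: real
  assumes p: "0 \<le> p" "p \<le> 1" and U: "U \<subseteq> {1..n}" and W: "W \<subseteq> {1..n}"
  shows "measure_pmf.prob (Gnp n p) {E. real (card (nbhd_in E U W)) < k}
    \<le> (\<Sum>T | T \<subseteq> W - U \<and> real (card T) < k.
          real (card U) ^ card T * p ^ card T * (1 - p) ^ (card U * card (W - U - T)))"
proof -
  define Ts where "Ts = {T. T \<subseteq> W - U \<and> real (card T) < k}"
  define Ev where "Ev T g = {E. map_edges g T \<subseteq> E \<and> E \<inter> edges_between U (W - U - T) = {}}"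
    for T g
  have fin: "finite U" "finite W" using U W finite_subset by auto
  have finTs: "finite Ts" unfolding Ts_def by (rule finite_subset[of _ "Pow W"]) (auto simp: fin)
  have finT: "finite T" if "T \<in> Ts" for T
    using that fin finite_subset unfolding Ts_def by auto
  have finPi: "finite (T \<rightarrow>\<^sub>E U)" if "T \<in> Ts" for T
    using finT[OF that] fin by (intro finite_PiE)
  have "{E. real (card (nbhd_in E U W)) < k} \<subseteq> (\<Union>T\<in>Ts. \<Union>g\<in>T \<rightarrow>\<^sub>E U. Ev T g)"
  proof
    fix E assume small: "E \<in> {E. real (card (nbhd_in E U W)) < k}"
    define T where "T = nbhd_in E U W"
    obtain g where g: "g ` T \<subseteq> U" "map_edges g T \<subseteq> E" "E \<inter> edges_between U (W - U - T) = {}"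
      unfolding T_def by (rule nbhd_in_witness)
    have "map_edges (restrict g T) T = map_edges g T" unfolding map_edges_def by simp
    then have "E \<in> Ev T (restrict g T)" using g unfolding Ev_def by simp
    moreover have "T \<in> Ts" using small nbhd_in_subset unfolding T_def Ts_def by auto
    moreover have "restrict g T \<in> T \<rightarrow>\<^sub>E U" using g(1) by auto
    ultimately show "E \<in> (\<Union>T\<in>Ts. \<Union>g\<in>T \<rightarrow>\<^sub>E U. Ev T g)" by blast
  qed
  then have "measure_pmf.prob (Gnp n p) {E. real (card (nbhd_in E U W)) < k}
      \<le> measure_pmf.prob (Gnp n p) (\<Union>T\<in>Ts. \<Union>g\<in>T \<rightarrow>\<^sub>E U. Ev T g)"
    by (intro measure_pmf.finite_measure_mono) auto
  also have "\<dots> \<le> (\<Sum>T\<in>Ts. measure_pmf.prob (Gnp n p) (\<Union>g\<in>T \<rightarrow>\<^sub>E U. Ev T g))"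
    using finTs by (intro measure_pmf.finite_measure_subadditive_finite) auto
  also have "\<dots> \<le> (\<Sum>T\<in>Ts. \<Sum>g\<in>T \<rightarrow>\<^sub>E U. measure_pmf.prob (Gnp n p) (Ev T g))"
    using finPi by (intro sum_mono measure_pmf.finite_measure_subadditive_finite) auto
  also have "\<dots> = (\<Sum>T\<in>Ts. \<Sum>g\<in>T \<rightarrow>\<^sub>E U. p ^ card T * (1 - p) ^ (card U * card (W - U - T)))"
    unfolding Ev_def Ts_def using prob_Gnp_map_edges_no_edges_between[OF p U W]
    by (intro sum.cong refl) (auto simp: PiE_def Pi_def)
  also have "\<dots> = (\<Sum>T\<in>Ts. real (card U) ^ card T * p ^ card T * (1 - p) ^ (card U * card (W - U - T)))"
    using finT by (intro sum.cong refl) (simp add: card_PiE)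
  finally show ?thesis unfolding Ts_def .
qed

lemma power_le_exp_mult:
  fixes a :: real
  assumes "-1 \<le> a"
  shows "(1 + a) ^ m \<le> exp (a * m)"
proof -
  have "(1 + a) ^ m \<le> exp a ^ m"
    using assms by (intro power_mono) (auto simp: add.commute exp_ge_add_one_self)
  also have "\<dots> = exp (a * m)" by (simp add: exp_of_nat_mult[symmetric] mult.commute)
  finally show ?thesis .
qed

lemma sum_Pow_power_card:
  fixes a :: "'a :: comm_semiring_1"
  assumes "finite S"
  shows "(\<Sum>T\<in>Pow S. a ^ card T) = (a + 1) ^ card S"
  using prod_add[OF assms, of "\<lambda>_. a" "\<lambda>_. 1"] by simp

lemma sum_small_subsets_power_le:
  fixes a k :: real
  assumes Y: "finite Y" and a: "0 \<le> a"
  shows "(\<Sum>T | T \<subseteq> Y \<and> real (card T) < k. a ^ card T) \<le> exp (3 * k + a * card Y / 8)"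
proof -
  have small_power: "a ^ card T \<le> exp (3 * k) * (a / 8) ^ card T" if "real (card T) < k" for T
  proof -
    have "(8::real) \<le> exp 3" using exp_lower_Taylor_quadratic[of 3] by simp
    then have "(8::real) ^ card T \<le> exp 3 ^ card T" by (intro power_mono) auto
    also have "\<dots> = exp (3 * card T)" by (simp add: exp_of_nat_mult[symmetric] mult.commute)
    also have "\<dots> \<le> exp (3 * k)" using that by simp
    finally have "8 ^ card T * (a / 8) ^ card T \<le> exp (3 * k) * (a / 8) ^ card T"
      using a by (intro mult_right_mono) auto
    then show ?thesis by (simp add: power_divide)
  qed
  have "(\<Sum>T | T \<subseteq> Y \<and> real (card T) < k. a ^ card T)
      \<le> (\<Sum>T | T \<subseteq> Y \<and> real (card T) < k. exp (3 * k) * (a / 8) ^ card T)"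
    using small_power by (intro sum_mono) auto
  also have "\<dots> \<le> (\<Sum>T\<in>Pow Y. exp (3 * k) * (a / 8) ^ card T)"
    using Y a by (intro sum_mono2) auto
  also have "\<dots> = exp (3 * k) * (1 + a / 8) ^ card Y"
    using Y by (simp add: sum_distrib_left[symmetric] sum_Pow_power_card add.commute)
  also have "\<dots> \<le> exp (3 * k) * exp (a / 8 * card Y)"
    using a by (intro mult_left_mono power_le_exp_mult) auto
  finally show ?thesis by (simp add: exp_add[symmetric])
qed

lemma sum_small_nbhd_events_le:
  fixes p d :: real
  assumes p: "0 \<le> p" "p \<le> 1" and fin: "finite U" "finite W"
    and d: "1 \<le> d" "24 * d \<le> p * card W" and U: "real (card U) \<le> real (card W) / (4 * d)"
  shows "(\<Sum>T | T \<subseteq> W - U \<and> real (card T) < d * card U.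
            real (card U) ^ card T * p ^ card T * (1 - p) ^ (card U * card (W - U - T)))
         \<le> exp (- p * card W * card U / 4)"
proof -
  define u w where "u = real (card U)" and "w = real (card W)"
  have "d * u \<le> d * (w / (4 * d))" using U d(1) unfolding u_def w_def by (intro mult_left_mono) auto
  then have du: "d * u \<le> w / 4" using d(1) by simp
  have u: "u \<le> w / 4" using du d(1) mult_right_mono[OF d(1), of u] unfolding u_def by simp
  have small_term: "u ^ card T * p ^ card T * (1 - p) ^ (card U * card (W - U - T))
      \<le> exp (- p * u * w / 2) * (u * p) ^ card T" if T: "T \<subseteq> W - U" "real (card T) < d * u" for T
  proof -
    have "W \<subseteq> (W - U - T) \<union> U \<union> T" by auto
    then have "card W \<le> card (W - U - T) + card U + card T"
      by (metis card_Un_le card_mono fin finite_Un finite_subset T(1) Diff_subset order_trans add_le_mono1)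
    then have "w / 2 \<le> card (W - U - T)" using u du T(2) unfolding u_def w_def by linarith
    then have "p * u * (w / 2) \<le> p * u * card (W - U - T)"
      using p unfolding u_def by (intro mult_left_mono) auto
    then have "exp (- p * u * card (W - U - T)) \<le> exp (- p * u * w / 2)" by simp
    moreover have "(1 - p) ^ (card U * card (W - U - T)) \<le> exp (- p * u * card (W - U - T))"
      using power_le_exp_mult[of "-p" "card U * card (W - U - T)"] p unfolding u_def
      by (simp add: mult.assoc)
    ultimately have "(1 - p) ^ (card U * card (W - U - T)) \<le> exp (- p * u * w / 2)"
      by linarith
    then have "(u * p) ^ card T * (1 - p) ^ (card U * card (W - U - T))
        \<le> (u * p) ^ card T * exp (- p * u * w / 2)"
      using p unfolding u_def by (intro mult_left_mono) auto
    then show ?thesis by (simp add: power_mult_distrib mult_ac)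
  qed
  have "(\<Sum>T | T \<subseteq> W - U \<and> real (card T) < d * u.
            u ^ card T * p ^ card T * (1 - p) ^ (card U * card (W - U - T)))
      \<le> exp (- p * u * w / 2) * (\<Sum>T | T \<subseteq> W - U \<and> real (card T) < d * u. (u * p) ^ card T)"
    unfolding sum_distrib_left using small_term by (intro sum_mono) auto
  also have "\<dots> \<le> exp (- p * u * w / 2) * exp (3 * (d * u) + u * p * card (W - U) / 8)"
    using fin p unfolding u_def by (intro mult_left_mono sum_small_subsets_power_le) auto
  also have "\<dots> \<le> exp (- p * u * w / 2) * exp (3 * (d * u) + u * p * w / 8)"
    using fin p card_mono[of W "W - U"] unfolding u_def w_def
    by (intro mult_left_mono) (auto intro!: mult_left_mono divide_right_mono)
  also have "\<dots> \<le> exp (- p * w * u / 4)"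
  proof -
    have "24 * d * u \<le> p * w * u" using d(2) unfolding u_def w_def by (intro mult_right_mono) auto
    then show ?thesis by (simp add: exp_add[symmetric] algebra_simps)
  qed
  finally show ?thesis unfolding u_def w_def .
qed

lemma sum_Pow_inverse_power_card_le:
  assumes "1 \<le> n" "1 \<le> k"
  shows "(\<Sum>U\<in>Pow {1..n}. (1 / real n ^ k) ^ card U) \<le> exp 1"
proof -
  have "(\<Sum>U\<in>Pow {1..n}. (1 / real n ^ k) ^ card U) = (1 + 1 / real n ^ k) ^ n"
    by (simp add: sum_Pow_power_card add.commute)
  also have "\<dots> \<le> exp (1 / real n ^ k * n)"
  proof (rule power_le_exp_mult)
    have "0 \<le> 1 / real n ^ k" by simp
    then show "-1 \<le> 1 / real n ^ k" by linarith
  qed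
  also have "\<dots> \<le> exp 1"
  proof -
    have "real n ^ 1 \<le> real n ^ k" using assms by (intro power_increasing) auto
    then show ?thesis using assms by (simp add: field_simps)
  qed
  finally show ?thesis .
qed

lemma one_le_ln_np:
  assumes "3 \<le> n" "0 < p" "W \<subseteq> {1..n}" "200 * ln (real n) \<le> p * real (card W)"
  shows "1 \<le> ln (real n * p)"
proof -
  have "1 \<le> ln (3::real)" using exp_le by (subst ln_ge_iff) auto
  also have "\<dots> \<le> ln (real n)" using assms(1) by simp
  finally have "200 \<le> p * real (card W)" using assms(4) by linarith
  also have "\<dots> \<le> p * real n"
    using card_mono[OF _ assms(3)] assms(2) by (intro mult_left_mono) auto
  finally have "exp 1 \<le> real n * p" using exp_le by (simp add: mult.commute)
  then show ?thesis using assms(1,2) by (subst ln_ge_iff) auto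
qed

lemma prob_Gnp_small_nbhd_in_le_power:
  fixes p d :: real
  assumes n: "1 \<le> n" and p: "0 \<le> p" "p \<le> 1" and U: "U \<subseteq> {1..n}" and W: "W \<subseteq> {1..n}"
    and pW: "200 * ln (real n) \<le> p * real (card W)" and d: "1 \<le> d" "24 * d \<le> p * real (card W)"
    and card_U: "real (card U) \<le> real (card W) / (4 * d)"
  shows "measure_pmf.prob (Gnp n p) {E. real (card (nbhd_in E U W)) < d * card U}
         \<le> 1 / real n ^ (50 * card U)"
proof -
  have "finite U" "finite W" using U W finite_subset by auto
  then have "measure_pmf.prob (Gnp n p) {E. real (card (nbhd_in E U W)) < d * card U}
      \<le> exp (- p * card W * card U / 4)"
    using p U W d card_U
    by (intro order_trans[OF prob_Gnp_small_nbhd_in_le sum_small_nbhd_events_le]) auto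
  also have "\<dots> \<le> exp (- (real (50 * card U) * ln (real n)))"
    using mult_right_mono[OF pW, of "card U"] by (simp add: algebra_simps)
  also have "exp (real (50 * card U) * ln (real n)) = real n ^ (50 * card U)"
    using n by (subst exp_of_nat_mult) simp
  then have "exp (- (real (50 * card U) * ln (real n))) = 1 / real n ^ (50 * card U)"
    by (metis exp_minus inverse_eq_divide)
  finally show ?thesis .
qed

lemma prob_Gnp_not_expanding_le:
  fixes p d :: real and W :: "nat set"
  assumes n: "3 \<le> n" and p: "0 < p" "p \<le> 1" and W: "W \<subseteq> {1..n}"
    and pW: "200 * ln (real n) \<le> p * real (card W)" and d: "1 \<le> d" "24 * d \<le> p * real (card W)"
  shows "measure_pmf.prob (Gnp n p)
           {E. \<not> (\<forall>U \<subseteq> {1..n}. real (card U) \<le> real (card W) / (4 * d) \<longrightarrow>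
                     real (card (nbhd_in E U W)) \<ge> d * real (card U))}
         \<le> exp 1 / real n ^ 3"
proof -
  define Us where "Us = {U. U \<subseteq> {1..n} \<and> U \<noteq> {} \<and> real (card U) \<le> real (card W) / (4 * d)}"
  define Small where "Small U = {E. real (card (nbhd_in E U W)) < d * card U}" for U
  have finUs: "finite Us" unfolding Us_def by (rule finite_subset[of _ "Pow {1..n}"]) auto
  have small_U: "measure_pmf.prob (Gnp n p) (Small U) \<le> 1 / real n ^ 3 * (1 / real n ^ 47) ^ card U"
    if U: "U \<in> Us" for U
  proof -
    have "card U \<noteq> 0" using U finite_subset[of U "{1..n}"] unfolding Us_def by auto
    have "measure_pmf.prob (Gnp n p) (Small U) \<le> 1 / real n ^ (50 * card U)"
      unfolding Small_def using n p W pW d U unfolding Us_def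
      by (intro prob_Gnp_small_nbhd_in_le_power) auto
    also have "\<dots> \<le> 1 / real n ^ (3 + 47 * card U)"
      using n \<open>card U \<noteq> 0\<close> by (intro divide_left_mono power_increasing) auto
    also have "\<dots> = 1 / real n ^ 3 * (1 / real n ^ 47) ^ card U"
      by (simp add: power_add power_mult power_divide)
    finally show ?thesis .
  qed
  have "{E. \<not> (\<forall>U \<subseteq> {1..n}. real (card U) \<le> real (card W) / (4 * d) \<longrightarrow>
              real (card (nbhd_in E U W)) \<ge> d * real (card U))} \<subseteq> (\<Union>U\<in>Us. Small U)"
    unfolding Us_def Small_def by force
  then have "measure_pmf.prob (Gnp n p)
           {E. \<not> (\<forall>U \<subseteq> {1..n}. real (card U) \<le> real (card W) / (4 * d) \<longrightarrow>
                     real (card (nbhd_in E U W)) \<ge> d * real (card U))}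
      \<le> measure_pmf.prob (Gnp n p) (\<Union>U\<in>Us. Small U)"
    by (intro measure_pmf.finite_measure_mono) auto
  also have "\<dots> \<le> (\<Sum>U\<in>Us. measure_pmf.prob (Gnp n p) (Small U))"
    using finUs by (intro measure_pmf.finite_measure_subadditive_finite) auto
  also have "\<dots> \<le> (\<Sum>U\<in>Us. 1 / real n ^ 3 * (1 / real n ^ 47) ^ card U)"
    using small_U by (rule sum_mono)
  also have "\<dots> \<le> (\<Sum>U\<in>Pow {1..n}. 1 / real n ^ 3 * (1 / real n ^ 47) ^ card U)"
    by (intro sum_mono2) (auto simp: Us_def)
  also have "\<dots> \<le> 1 / real n ^ 3 * exp 1"
    unfolding sum_distrib_left[symmetric] using n
    by (intro mult_left_mono sum_Pow_inverse_power_card_le) auto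
  finally show ?thesis by simp
qed

theorem lemma3p39:
  fixes p :: "nat \<Rightarrow> real" and W :: "nat \<Rightarrow> nat set" and d :: "nat \<Rightarrow> real"
  assumes "\<forall>\<^sub>F n in sequentially. 0 < p n \<and> p n \<le> 1"
      and "\<forall>\<^sub>F n in sequentially. W n \<subseteq> {1..n}"
      and "\<forall>\<^sub>F n in sequentially. p n * real (card (W n)) \<ge> 200 * ln (real n)"
      and "\<forall>\<^sub>F n in sequentially. 1 \<le> d n \<and>
             d n \<le> p n * real (card (W n)) / (240 * ln (real n * p n))"
  shows "(\<lambda>n. measure_pmf.prob (Gnp n (p n))
            {E. \<not> (\<forall>U \<subseteq> {1..n}. real (card U) \<le> real (card (W n)) / (4 * d n) \<longrightarrow>
                      real (card (nbhd_in E U (W n))) \<ge> d n * real (card U))})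
         \<in> o(\<lambda>n. 1 / real n ^ 2)"
proof -
  have "\<forall>\<^sub>F n in sequentially. norm (measure_pmf.prob (Gnp n (p n))
            {E. \<not> (\<forall>U \<subseteq> {1..n}. real (card U) \<le> real (card (W n)) / (4 * d n) \<longrightarrow>
                      real (card (nbhd_in E U (W n))) \<ge> d n * real (card U))})
         \<le> exp 1 * norm (1 / real n ^ 3)"
    using assms eventually_ge_at_top[of 3]
  proof eventually_elim
    case (elim n)
    then have ln_np: "1 \<le> ln (real n * p n)" by (intro one_le_ln_np[of n _ "W n"]) auto
    have "d n \<le> p n * real (card (W n)) / (240 * ln (real n * p n))" using elim(4) by simp
    also have "\<dots> \<le> p n * real (card (W n)) / 240"
      using ln_np elim(1) by (intro divide_left_mono) auto
    finally have "240 * d n \<le> p n * real (card (W n))" by simp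
    then have "24 * d n \<le> p n * real (card (W n))" using elim(4) by linarith
    then show ?case using elim prob_Gnp_not_expanding_le[of n "p n" "W n" "d n"] by simp
  qed
  then have "(\<lambda>n. measure_pmf.prob (Gnp n (p n))
            {E. \<not> (\<forall>U \<subseteq> {1..n}. real (card U) \<le> real (card (W n)) / (4 * d n) \<longrightarrow>
                      real (card (nbhd_in E U (W n))) \<ge> d n * real (card U))})
         \<in> O(\<lambda>n. 1 / real n ^ 3)"
    by (rule bigoI)
  moreover have "(\<lambda>n. 1 / real n ^ 3) \<in> o(\<lambda>n. 1 / real n ^ 2)" by real_asymp
  ultimately show ?thesis by (rule landau_o.big_small_trans)
qed

end
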